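(* Let $n\ge 2$ be even and $r\ge 1$, let $V=\{1,\dots,n\}$, $R=\{n+1,\dots,n+r\}$, and let $A^R=(a_{ij})_{i,j\in V\cup R}$ be a skew-symmetric complex matrix with zero column sums, with associated graphs $G^R$ (on $V\cup R$) and $G$ (on $V$). Let $\mathcal{M}$ be the set of perfect matchings of $G$. Let $\mathcal{F}$ be the set of spanning forests of $G^R$ satisfying Condition (C) (without reference matching), and for $M_0\in\mathcal{M}$ let $\mathcal{F}(M_0)$ be the set of spanning forests of $G^R$ compatible with $M_0$ satisfying Condition (C) relative to $M_0$. Then $$\mathcal{F}=\bigcup_{M_0\in\mathcal{M}}\mathcal{F}(M_0).$$
   Context: $G^R$ has vertex set $V\cup R$ and an edge $ij$ whenever $a_{ij}\ne0$; $G$ is its induced subgraph on $V$. A spanning forest of $G^R$ is a set $F$ of oriented edges of $G^R$ containing no cycle such that each vertex of $V$ has exactly one outgoing edge in $F$ and vertices of $R$ have none. $F$ is compatible with a perfect matching $M_0$ if, forgetting orientations, $F\supseteq M_0$. Trimming algorithm, applied to a spanning forest $F$: set $F_1=F$. At step $i\ge1$, let $\ell^i$ be the leaf of $F_i$ (vertex of $V$ with an outgoing edge in $F_i$ and no incoming edge in $F_i$) with the largest label. Follow the unique directed path in $F_i$ from $\ell^i$, stopping at the first vertex reached which is a vertex of $R$, or a fork (vertex with more than one incoming edge in $F_i$), or a vertex with label smaller than $\ell^i$; call it $\lambda_{\ell^i}$. Set $F_{i+1}=F_i\setminus\lambda_{\ell^i}$; stop when $F_{i+1}$ is empty, after $N$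 steps. Condition (C) (without reference matching): each path $\lambda_{\ell^1},\dots,\lambda_{\ell^N}$ has even length. Condition (C) relative to $M_0$: each such path has even length and its first edge belongs to $M_0$. *)

theory Defs
  imports Complex_Main
begin

text \<open>Vertices are natural numbers: V = {1..n}, R = {n+1..n+r}.
  The matrix A^R is a function a :: nat => nat => complex, only read on V \<union> R.
  Oriented edges are pairs (i,j), meaning i -> j.\<close>

definition Vset :: "nat \<Rightarrow> nat set" where
  "Vset n = {1..n}"

definition Rset :: "nat \<Rightarrow> nat \<Rightarrow> nat set" where
  "Rset n r = {n+1..n+r}"

definition spanning_forest :: "nat \<Rightarrow> nat \<Rightarrow> (nat \<Rightarrow> nat \<Rightarrow> complex) \<Rightarrow> (nat \<times> nat) set \<Rightarrow> bool" where
  "spanning_forest n r a F \<longleftrightarrow>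
     F \<subseteq> {(i,j). i \<in> Vset n \<union> Rset n r \<and> j \<in> Vset n \<union> Rset n r \<and> i \<noteq> j \<and> a i j \<noteq> 0}
   \<and> acyclic F
   \<and> (\<forall>v\<in>Vset n. \<exists>!w. (v,w) \<in> F)
   \<and> (\<forall>v\<in>Rset n r. \<forall>w. (v,w) \<notin> F)"

definition perfect_matchings :: "nat \<Rightarrow> (nat \<Rightarrow> nat \<Rightarrow> complex) \<Rightarrow> nat set set set" where
  "perfect_matchings n a = {M.
      M \<subseteq> {{i,j} | i j. i \<in> Vset n \<and> j \<in> Vset n \<and> i \<noteq> j \<and> a i j \<noteq> 0}
    \<and> (\<forall>v\<in>Vset n. \<exists>!e. e \<in> M \<and> v \<in> e)}"

definition compatible :: "nat set set \<Rightarrow> (nat \<times> nat) set \<Rightarrow> bool" where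
  "compatible M F \<longleftrightarrow> (\<forall>e\<in>M. \<exists>i j. (i,j) \<in> F \<and> e = {i,j})"

definition is_leaf :: "nat \<Rightarrow> (nat \<times> nat) set \<Rightarrow> nat \<Rightarrow> bool" where
  "is_leaf n F v \<longleftrightarrow> v \<in> Vset n \<and> (\<exists>w. (v,w) \<in> F) \<and> \<not> (\<exists>u. (u,v) \<in> F)"

definition stop_vertex :: "nat \<Rightarrow> nat \<Rightarrow> (nat \<times> nat) set \<Rightarrow> nat \<Rightarrow> nat \<Rightarrow> bool" where
  "stop_vertex n r F l v \<longleftrightarrow> v \<in> Rset n r \<or> card {u. (u,v) \<in> F} \<ge> 2 \<or> v < l"

text \<open>The path lambda_l, as the list of its vertices (from l to the stopping vertex);
  its length (number of edges) is length vs - 1.\<close>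
definition trim_path :: "nat \<Rightarrow> nat \<Rightarrow> (nat \<times> nat) set \<Rightarrow> nat \<Rightarrow> nat list \<Rightarrow> bool" where
  "trim_path n r F l vs \<longleftrightarrow>
     length vs \<ge> 2 \<and> hd vs = l
   \<and> (\<forall>i. i + 1 < length vs \<longrightarrow> (vs ! i, vs ! (i+1)) \<in> F)
   \<and> stop_vertex n r F l (last vs)
   \<and> (\<forall>i. 0 < i \<and> i + 1 < length vs \<longrightarrow> \<not> stop_vertex n r F l (vs ! i))"

definition path_edges :: "nat list \<Rightarrow> (nat \<times> nat) set" where
  "path_edges vs = {(vs ! i, vs ! (i+1)) | i. i + 1 < length vs}"

text \<open>trim_run n r F ps: the trimming algorithm started at F produces the successive
  paths ps = [lambda_{l^1}, ..., lambda_{l^N}] and ends with the empty set.\<close>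
inductive trim_run :: "nat \<Rightarrow> nat \<Rightarrow> (nat \<times> nat) set \<Rightarrow> nat list list \<Rightarrow> bool" where
  stop: "trim_run n r {} []"
| step: "\<lbrakk> F \<noteq> {}; l = Max {v. is_leaf n F v}; trim_path n r F l vs;
           trim_run n r (F - path_edges vs) ps \<rbrakk> \<Longrightarrow> trim_run n r F (vs # ps)"

definition condC :: "nat \<Rightarrow> nat \<Rightarrow> (nat \<times> nat) set \<Rightarrow> bool" where
  "condC n r F \<longleftrightarrow> (\<exists>ps. trim_run n r F ps \<and> (\<forall>vs\<in>set ps. even (length vs - 1)))"

definition condC_rel :: "nat \<Rightarrow> nat \<Rightarrow> nat set set \<Rightarrow> (nat \<times> nat) set \<Rightarrow> bool" where
  "condC_rel n r M0 F \<longleftrightarrow> (\<exists>ps. trim_run n r F ps \<and>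
      (\<forall>vs\<in>set ps. even (length vs - 1) \<and> {vs ! 0, vs ! 1} \<in> M0))"

end

theory Submission
  imports Defs
begin

text \<open>Condition (C) relative to a matching trivially implies Condition (C). Conversely, the
  paths produced by the trimming algorithm partition the edges of F into edge-disjoint directed
  paths. Since F is acyclic and every vertex of V has exactly one outgoing edge, every vertex of V
  occurs as a non-final vertex of exactly one path, at exactly one position. If all paths have
  even length, pairing the first and second, third and fourth, ... vertices of each path therefore
  yields a perfect matching of G inside F, and it contains the first edge of every path.\<close>

lemma path_edgesI: "i + 1 < length vs \<Longrightarrow> (vs ! i, vs ! (i + 1)) \<in> path_edges vs"
  by (auto simp: path_edges_def)

lemma path_edges_trancl:
  assumes "path_edges vs \<subseteq> F" and "i < j" and "j < length vs"
  shows "(vs ! i, vs ! j) \<in> F\<^sup>+"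
  using assms(2,3)
proof (induction j)
  case 0
  then show ?case by simp
next
  case (Suc j)
  have step: "(vs ! j, vs ! Suc j) \<in> F"
    using assms(1) path_edgesI[of j vs] Suc.prems by auto
  show ?case
  proof (cases "i = j")
    case True
    then show ?thesis using step by auto
  next
    case False
    then have "(vs ! i, vs ! j) \<in> F\<^sup>+" using Suc by auto
    then show ?thesis using step by (rule trancl_into_trancl)
  qed
qed

lemma acyclic_path_distinct:
  assumes "acyclic F" and "path_edges vs \<subseteq> F"
  shows "distinct vs"
proof (rule distinct_conv_nth[THEN iffD2], intro allI impI)
  fix i j assume "i < length vs" "j < length vs" "i \<noteq> j"
  then have "(vs ! min i j, vs ! max i j) \<in> F\<^sup>+"
    using path_edges_trancl[OF assms(2)] by (simp add: min_def max_def)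
  then show "vs ! i \<noteq> vs ! j"
    using assms(1) unfolding acyclic_def by (metis min_def max_def)
qed

lemma disjoint_paths_unique_position:
  assumes "single_valued F" and "acyclic F"
    and "path_edges vs \<subseteq> F" and "path_edges ws \<subseteq> F"
    and "vs \<noteq> ws \<Longrightarrow> path_edges vs \<inter> path_edges ws = {}"
    and "i + 1 < length vs" and "j + 1 < length ws" and "vs ! i = ws ! j"
  shows "vs = ws \<and> i = j"
proof -
  have "(vs ! i, vs ! (i + 1)) \<in> F" "(ws ! j, ws ! (j + 1)) \<in> F"
    using assms(3,4,6,7) path_edgesI by blast+
  then have "vs ! (i + 1) = ws ! (j + 1)"
    using assms(1,8) by (metis single_valuedD)
  then have "(vs ! i, vs ! (i + 1)) \<in> path_edges vs \<inter> path_edges ws"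
    using assms(6-8) path_edgesI by (metis IntI)
  then have "vs = ws" using assms(5) by blast
  moreover have "distinct vs" using acyclic_path_distinct assms(2,3) .
  ultimately show ?thesis
    using assms(6-8) nth_eq_iff_index_eq[of vs i j] by auto
qed

lemma spanning_forest_single_valued:
  assumes "spanning_forest n r a F"
  shows "single_valued F"
proof (rule single_valuedI)
  fix x y z assume xy: "(x, y) \<in> F" and xz: "(x, z) \<in> F"
  then have "x \<in> Vset n" using assms unfolding spanning_forest_def by blast
  then have "\<exists>!w. (x, w) \<in> F" using assms unfolding spanning_forest_def by blast
  then show "y = z" using xy xz by blast
qed

lemma trim_path_edges:
  assumes "trim_path n r F l vs"
  shows "path_edges vs \<subseteq> F" and "2 \<le> length vs"
  using assms unfolding trim_path_def path_edges_def by auto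

lemma trim_run_Union: "trim_run n r F ps \<Longrightarrow> F = (\<Union>vs\<in>set ps. path_edges vs)"
proof (induction rule: trim_run.induct)
  case stop
  then show ?case by simp
next
  case (step F l n r vs ps)
  then show ?case using trim_path_edges(1)[OF step.hyps(3)] by auto
qed

lemma trim_run_length: "trim_run n r F ps \<Longrightarrow> vs \<in> set ps \<Longrightarrow> 2 \<le> length vs"
  by (induction rule: trim_run.induct) (use trim_path_edges(2) in auto)

lemma trim_run_disjoint:
  "trim_run n r F ps \<Longrightarrow> vs \<in> set ps \<Longrightarrow> ws \<in> set ps \<Longrightarrow> vs \<noteq> ws
    \<Longrightarrow> path_edges vs \<inter> path_edges ws = {}"
proof (induction arbitrary: vs ws rule: trim_run.induct)
  case stop
  then show ?case by simp
next
  case (step F l n r us ps)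
  have "path_edges xs \<subseteq> F - path_edges us" if "xs \<in> set ps" for xs
    using trim_run_Union[OF step.hyps(4)] that by blast
  then show ?case using step by (metis Diff_disjoint Int_commute disjoint_iff set_ConsD subsetD)
qed

text \<open>For a path of even length these edges cover every vertex but the last.\<close>
definition path_matching :: "nat list \<Rightarrow> nat set set" where
  "path_matching vs = {{vs ! (2 * k), vs ! (2 * k + 1)} | k. 2 * k + 2 < length vs}"

lemma path_matchingE:
  assumes "e \<in> path_matching vs" and "v \<in> e"
  obtains q where "q + 1 < length vs" and "vs ! q = v"
    and "e = {vs ! (2 * (q div 2)), vs ! (2 * (q div 2) + 1)}"
proof -
  obtain k where k: "2 * k + 2 < length vs" "e = {vs ! (2 * k), vs ! (2 * k + 1)}"
    using assms(1) unfolding path_matching_def by blast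
  then consider "v = vs ! (2 * k)" | "v = vs ! (2 * k + 1)" using assms(2) by blast
  then show thesis
  proof cases
    case 1
    then show thesis using that[of "2 * k"] k by simp
  next
    case 2
    then show thesis using that[of "2 * k + 1"] k by simp
  qed
qed

lemma path_matching_covers:
  assumes "even (length vs - 1)" and "i + 1 < length vs"
  shows "{vs ! (2 * (i div 2)), vs ! (2 * (i div 2) + 1)} \<in> path_matching vs"
    and "vs ! i \<in> {vs ! (2 * (i div 2)), vs ! (2 * (i div 2) + 1)}"
proof -
  have "2 * (i div 2) + 2 < length vs" using assms by presburger
  then show "{vs ! (2 * (i div 2)), vs ! (2 * (i div 2) + 1)} \<in> path_matching vs"
    unfolding path_matching_def by blast
  show "vs ! i \<in> {vs ! (2 * (i div 2)), vs ! (2 * (i div 2) + 1)}"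
    by (cases "even i") (auto simp: odd_two_times_div_two_succ)
qed

lemma path_matching_edges:
  "e \<in> path_matching vs \<Longrightarrow> \<exists>k. k + 2 < length vs \<and> e = {vs ! k, vs ! (k + 1)}"
  unfolding path_matching_def by auto

definition run_matching :: "nat list list \<Rightarrow> nat set set" where
  "run_matching ps = (\<Union>vs\<in>set ps. path_matching vs)"

context
  fixes n r :: nat and a :: "nat \<Rightarrow> nat \<Rightarrow> complex" and F ps
  assumes forest: "spanning_forest n r a F"
    and run: "trim_run n r F ps"
    and even_paths: "\<forall>vs\<in>set ps. even (length vs - 1)"
begin

lemma run_path_edges: "vs \<in> set ps \<Longrightarrow> path_edges vs \<subseteq> F"
  using trim_run_Union[OF run] by blast

lemma run_unique_position:
  assumes "vs \<in> set ps" and "ws \<in> set ps" and "i + 1 < length vs" and "j + 1 < length ws"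
    and "vs ! i = ws ! j"
  shows "vs = ws \<and> i = j"
proof (rule disjoint_paths_unique_position)
  show "single_valued F" using spanning_forest_single_valued[OF forest] .
  show "acyclic F" using forest unfolding spanning_forest_def by blast
  show "vs \<noteq> ws \<Longrightarrow> path_edges vs \<inter> path_edges ws = {}"
    using trim_run_disjoint[OF run assms(1,2)] .
qed (use assms run_path_edges in auto)

lemma run_matching_in_forest:
  assumes "e \<in> run_matching ps"
  shows "\<exists>x y z. (x, y) \<in> F \<and> (y, z) \<in> F \<and> e = {x, y}"
proof -
  obtain vs k where vs: "vs \<in> set ps" "k + 2 < length vs" "e = {vs ! k, vs ! (k + 1)}"
    using assms path_matching_edges unfolding run_matching_def by blast
  have "(vs ! k, vs ! (k + 1)) \<in> F" "(vs ! (k + 1), vs ! (k + 1 + 1)) \<in> F"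
    using run_path_edges[OF vs(1)] path_edgesI[of k vs] path_edgesI[of "k + 1" vs] vs(2) by auto
  then show ?thesis using vs(3) by blast
qed

lemma run_matching_covers:
  assumes "v \<in> Vset n"
  shows "\<exists>!e. e \<in> run_matching ps \<and> v \<in> e"
proof -
  obtain w where "(v, w) \<in> F" using assms forest unfolding spanning_forest_def by blast
  then obtain vs i where vs: "vs \<in> set ps" "i + 1 < length vs" "vs ! i = v"
    using trim_run_Union[OF run] unfolding path_edges_def by blast
  let ?e = "{vs ! (2 * (i div 2)), vs ! (2 * (i div 2) + 1)}"
  show ?thesis
  proof (rule ex1I[of _ ?e])
    show "?e \<in> run_matching ps \<and> v \<in> ?e"
      using path_matching_covers[of vs i] vs even_paths unfolding run_matching_def by auto
  next
    fix e assume e: "e \<in> run_matching ps \<and> v \<in> e"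
    then obtain ws where ws: "ws \<in> set ps" "e \<in> path_matching ws"
      unfolding run_matching_def by blast
    then obtain q where "q + 1 < length ws" "ws ! q = v"
      and "e = {ws ! (2 * (q div 2)), ws ! (2 * (q div 2) + 1)}"
      using e path_matchingE by metis
    with run_unique_position[OF ws(1) vs(1)] vs show "e = ?e" by auto
  qed
qed

lemma run_matching_perfect: "run_matching ps \<in> perfect_matchings n a"
proof -
  have "e \<in> {{i, j} | i j. i \<in> Vset n \<and> j \<in> Vset n \<and> i \<noteq> j \<and> a i j \<noteq> 0}"
    if e: "e \<in> run_matching ps" for e
  proof -
    obtain x y z where "(x, y) \<in> F" "(y, z) \<in> F" "e = {x, y}"
      using run_matching_in_forest[OF e] by blast
    with forest show ?thesis unfolding spanning_forest_def by blast
  qed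
  then show ?thesis
    unfolding perfect_matchings_def using run_matching_covers by blast
qed

lemma run_matching_compatible: "compatible (run_matching ps) F"
  unfolding compatible_def using run_matching_in_forest by blast

lemma run_matching_first_edges:
  assumes "vs \<in> set ps"
  shows "{vs ! 0, vs ! 1} \<in> run_matching ps"
proof -
  have "0 + 1 < length vs" using trim_run_length[OF run assms] by simp
  then have "{vs ! 0, vs ! 1} \<in> path_matching vs"
    using path_matching_covers(1)[of vs 0] even_paths assms by simp
  then show ?thesis using assms unfolding run_matching_def by blast
qed

end

lemma condC_imp_condC_rel:
  assumes "spanning_forest n r a F" and "condC n r F"
  shows "\<exists>M0\<in>perfect_matchings n a. compatible M0 F \<and> condC_rel n r M0 F"
proof -
  obtain ps where run: "trim_run n r F ps" and even: "\<forall>vs\<in>set ps. even (length vs - 1)"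
    using assms(2) unfolding condC_def by blast
  have "condC_rel n r (run_matching ps) F"
    unfolding condC_rel_def using run even run_matching_first_edges[OF assms(1) run even] by blast
  then show ?thesis
    using run_matching_perfect[OF assms(1) run even] run_matching_compatible[OF assms(1) run even]
    by blast
qed

lemma condC_rel_imp_condC: "condC_rel n r M0 F \<Longrightarrow> condC n r F"
  unfolding condC_rel_def condC_def by blast

theorem lemma8:
  fixes n r :: nat and a :: "nat \<Rightarrow> nat \<Rightarrow> complex"
  assumes "even n" and "n \<ge> 2" and "r \<ge> 1"
    and skew: "\<forall>i\<in>Vset n \<union> Rset n r. \<forall>j\<in>Vset n \<union> Rset n r. a j i = - a i j"
    and colsum: "\<forall>j\<in>Vset n \<union> Rset n r. (\<Sum>i\<in>Vset n \<union> Rset n r. a i j) = 0"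
  shows "{F. spanning_forest n r a F \<and> condC n r F}
         = (\<Union>M0\<in>perfect_matchings n a.
              {F. spanning_forest n r a F \<and> compatible M0 F \<and> condC_rel n r M0 F})"
proof (intro set_eqI iffI)
  fix F assume "F \<in> {F. spanning_forest n r a F \<and> condC n r F}"
  then have forest: "spanning_forest n r a F" and "condC n r F" by auto
  then obtain M0 where "M0 \<in> perfect_matchings n a" "compatible M0 F" "condC_rel n r M0 F"
    using condC_imp_condC_rel by blast
  with forest show "F \<in> (\<Union>M0\<in>perfect_matchings n a.
              {F. spanning_forest n r a F \<and> compatible M0 F \<and> condC_rel n r M0 F})"
    by blast
next
  fix F assume "F \<in> (\<Union>M0\<in>perfect_matchings n a.
              {F. spanning_forest n r a F \<and> compatible M0 F \<and> condC_rel n r M0 F})"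
  then obtain M0 where "spanning_forest n r a F" "condC_rel n r M0 F" by blast
  then show "F \<in> {F. spanning_forest n r a F \<and> condC n r F}"
    using condC_rel_imp_condC by blast
qed

end
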